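(* If $\mathbb E[\xi]\in(0,\infty)$ and $\mathbb E[\nu^2]<\infty$, then there exists a constant $c>0$ such that $\mathbb E[C_n]\ge c/n$ for all $n\ge1$.
   Context: Let $\mathbf p=(p_k)_{k\ge0}$ be a probability distribution on the nonnegative integers with $p_0=0$ and finite mean $m=\sum_k kp_k>1$. Let $\mathbb T$ be a Galton–Watson tree with offspring distribution $\mathbf p$, rooted at $\varnothing$, and $\nu$ the number of children of the root. For a vertex $x$, $|x|$ is its depth and $\overleftarrow{x}$ its parent; $\mathbb T_n=\{x\in\mathbb T:|x|=n\}$; the edge $e=\{\overleftarrow x,x\}$ has depth $d(e)=|x|$. Let $\xi$ be a strictly positive random variable; conditionally on $\mathbb T$, $\{\xi(e)\}$ are i.i.d. copies of $\xi$ and edge $e$ gets resistance $r(e)=m^{d(e)}\xi(e)$. $C_n$ is the effective conductance between $\varnothing$ and $\mathbb T_n$. *)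

theory Defs
  imports "HOL-Probability.Probability"
begin

text \<open>Galton-Watson tree in Ulam-Harris labelling: vertices are lists of naturals,
  N u is the number of children of label u; the root is the empty list and
  u @ [i] is in the tree iff u is and i < N u.\<close>
definition gw_tree :: "(nat list \<Rightarrow> nat) \<Rightarrow> nat list set" where
  "gw_tree N = {u. \<forall>k<length u. u ! k < N (take k u)}"

text \<open>Effective conductance between the root and level n (Dirichlet principle),
  in the network formed by the vertices of depth at most n; the edge from
  butlast u to u has resistance r u.\<close>
definition eff_conductance ::
  "(nat list \<Rightarrow> nat) \<Rightarrow> (nat list \<Rightarrow> real) \<Rightarrow> nat \<Rightarrow> real" where
  "eff_conductance N r n =
     (INF f \<in> {f :: nat list \<Rightarrow> real. f [] = 1 \<and> (\<forall>u\<in>gw_tree N. length u = n \<longrightarrow> f u = 0)}.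
        \<Sum>u\<in>{u\<in>gw_tree N. 1 \<le> length u \<and> length u \<le> n}. (f u - f (butlast u))^2 / r u)"

text \<open>Sample space: for every label u, an independent pair (number of children of u,
  weight xi of the edge leading into u), distributed as p \<times> X.\<close>
definition gw_space :: "nat pmf \<Rightarrow> real measure \<Rightarrow> (nat list \<Rightarrow> nat \<times> real) measure" where
  "gw_space p X = (\<Pi>\<^sub>M u\<in>UNIV. (measure_pmf p \<Otimes>\<^sub>M X))"

definition offspring_mean :: "nat pmf \<Rightarrow> real" where
  "offspring_mean p = measure_pmf.expectation p real"

definition gw_conductance :: "nat pmf \<Rightarrow> nat \<Rightarrow> (nat list \<Rightarrow> nat \<times> real) \<Rightarrow> real" where
  "gw_conductance p n \<omega> =
     eff_conductance (\<lambda>u. fst (\<omega> u)) (\<lambda>u. offspring_mean p ^ length u * snd (\<omega> u)) n"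

end

theory Submission
  imports Defs
begin

text \<open>Prune the tree to the first \<open>K\<close> children of every vertex, let \<open>Z\<close> be the number of
  vertices at depth \<open>n\<close> and \<open>Z\<^sub>u\<close> the number of those descending from \<open>u\<close>. Then
  \<open>Z\<^sub>u / Z\<close> is a unit flow, and Thomson's principle (here: the telescoping identity
  \<open>Z = \<Sum>\<^sub>u (f(parent u) - f u) Z\<^sub>u\<close> plus Cauchy-Schwarz against the Dirichlet principle) gives
  \<open>C\<^sub>n \<ge> Z\<^sup>2 / W\<close> with \<open>W = \<Sum>\<^sub>u Z\<^sub>u\<^sup>2 r(u)\<close>. Consequently \<open>E C\<^sub>n \<ge> (E Z)\<^sup>2 / E W\<close>. Here
  \<open>E Z = m\<^sub>K\<^sup>n\<close> with \<open>m\<^sub>K \<rightarrow> m\<close> as \<open>K \<rightarrow> \<infinity>\<close>. In \<open>E W\<close>, pairs of depth-\<open>n\<close> vertices whose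
  ancestral lines agree up to depth \<open>k\<close> number \<open>O(m\<^sup>2\<^sup>n\<^sup>-\<^sup>k)\<close> in expectation (by finiteness of
  \<open>E \<nu>\<^sup>2\<close>), and the resistance \<open>m\<^sup>k\<close> at depth \<open>k\<close> turns this into \<open>O(m\<^sup>2\<^sup>n)\<close>; summing over
  the \<open>n\<close> levels, \<open>E W = O(n m\<^sup>2\<^sup>n)\<close> and so \<open>E C\<^sub>n \<ge> c / n\<close>.\<close>

section \<open>Pruned trees and the Dirichlet principle\<close>

definition words :: "nat \<Rightarrow> nat \<Rightarrow> nat list set" where
  "words K n = {xs. set xs \<subseteq> {..<K} \<and> length xs = n}"

definition nonroot_words :: "nat \<Rightarrow> nat \<Rightarrow> nat list set" where
  "nonroot_words K n = {u. set u \<subseteq> {..<K} \<and> 1 \<le> length u \<and> length u \<le> n}"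

text \<open>Descendants at depth \<open>n\<close> of \<open>u\<close> in the tree pruned to the first \<open>K\<close> children of
  every vertex. Pruning keeps all sums finite; its expected generation size
  \<open>trunc_mean p K ^ n\<close> tends to \<open>m\<^sup>n\<close> as \<open>K \<rightarrow> \<infinity>\<close>.\<close>
definition desc_count :: "(nat list \<Rightarrow> nat) \<Rightarrow> nat \<Rightarrow> nat \<Rightarrow> nat list \<Rightarrow> real" where
  "desc_count N K n u = (\<Sum>w\<in>{w\<in>words K n. take (length u) w = u}. indicator (gw_tree N) w)"

text \<open>\<open>desc_count N K n u / desc_count N K n []\<close> is a unit flow from the root to depth \<open>n\<close>;
  \<open>flow_energy\<close> is \<open>(desc_count N K n [])\<^sup>2\<close> times its energy.\<close>
definition flow_energy :: "(nat list \<Rightarrow> nat) \<Rightarrow> (nat list \<Rightarrow> real) \<Rightarrow> nat \<Rightarrow> nat \<Rightarrow> real" where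
  "flow_energy N r K n = (\<Sum>u\<in>nonroot_words K n. (desc_count N K n u)\<^sup>2 * r u)"

definition agreeing_pairs :: "nat \<Rightarrow> nat \<Rightarrow> nat \<Rightarrow> (nat list \<times> nat list) set" where
  "agreeing_pairs K n k = {(v, w)\<in>words K n \<times> words K n. take k v = take k w}"

lemma finite_words [simp]: "finite (words K n)"
  unfolding words_def by (rule finite_lists_length_eq) simp

lemma finite_nonroot_words [simp]: "finite (nonroot_words K n)"
proof -
  have "nonroot_words K n \<subseteq> (\<Union>k\<le>n. words K k)"
    unfolding nonroot_words_def words_def by auto
  moreover have "finite (\<Union>k\<le>n. words K k)" by simp
  ultimately show ?thesis by (rule finite_subset)
qed

lemma finite_agreeing_pairs [simp]: "finite (agreeing_pairs K n k)"
  unfolding agreeing_pairs_def by (rule finite_subset[of _ "words K n \<times> words K n"]) auto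

lemma words_0: "words K 0 = {[]}"
  by (auto simp: words_def)

lemma words_Suc: "words K (Suc n) = (\<lambda>(a, w). a # w) ` ({..<K} \<times> words K n)"
proof (intro equalityI subsetI)
  fix x assume "x \<in> words K (Suc n)"
  then obtain a w where "x = a # w" "a < K" "w \<in> words K n"
    unfolding words_def by (cases x) auto
  then show "x \<in> (\<lambda>(a, w). a # w) ` ({..<K} \<times> words K n)" by force
qed (auto simp: words_def)

lemma sum_words_Suc: "(\<Sum>x\<in>words K (Suc n). g x) = (\<Sum>a<K. \<Sum>v\<in>words K n. g (a # v))"
proof -
  have "inj_on (\<lambda>(a, w). a # w) ({..<K} \<times> words K n)"
    by (auto simp: inj_on_def)
  then show ?thesis
    unfolding words_Suc by (simp add: sum.reindex sum.cartesian_product case_prod_unfold)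
qed

lemma take_in_words: "v \<in> words K n \<Longrightarrow> k \<le> n \<Longrightarrow> take k v \<in> words K k"
  unfolding words_def using set_take_subset[of k v] by auto

lemma sum_nonroot_words: "(\<Sum>u\<in>nonroot_words K n. F u) = (\<Sum>k\<in>{1..n}. \<Sum>u\<in>words K k. F u)"
proof -
  have "(\<Sum>u\<in>nonroot_words K n. F u) = (\<Sum>k\<in>{1..n}. \<Sum>u\<in>{u\<in>nonroot_words K n. length u = k}. F u)"
    by (rule sum.group[symmetric], simp, simp) (auto simp: nonroot_words_def)
  also have "\<dots> = (\<Sum>k\<in>{1..n}. \<Sum>u\<in>words K k. F u)"
    by (intro sum.cong refl arg_cong[where f="sum F"]) (auto simp: nonroot_words_def words_def)
  finally show ?thesis .
qed

lemma take_in_gw_tree: "w \<in> gw_tree N \<Longrightarrow> take k w \<in> gw_tree N"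
  unfolding gw_tree_def by (auto simp: min_def)

lemma indicator_gw_tree_eq_prod:
  "indicator (gw_tree N) w = (\<Prod>i<length w. if w ! i < N (take i w) then 1 else 0 :: real)"
  unfolding gw_tree_def indicator_def by (auto simp: prod_zero_iff)

lemma finite_gw_tree_levels: "finite {u\<in>gw_tree N. length u \<le> n}"
proof (induction n)
  case 0
  then show ?case by (rule finite_subset[of _ "{[]}"]) auto
next
  case (Suc n)
  let ?A = "{u\<in>gw_tree N. length u \<le> n}"
  have "{u\<in>gw_tree N. length u \<le> Suc n} \<subseteq> ?A \<union> (\<lambda>(u, i). u @ [i]) ` Sigma ?A (\<lambda>u. {..<N u})"
  proof
    fix u assume u: "u \<in> {u\<in>gw_tree N. length u \<le> Suc n}"
    show "u \<in> ?A \<union> (\<lambda>(u, i). u @ [i]) ` Sigma ?A (\<lambda>u. {..<N u})"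
    proof (cases "length u = Suc n")
      case True
      then have bt: "butlast u = take n u" and ne: "u \<noteq> []"
        by (auto simp: butlast_conv_take)
      have "u ! n < N (take n u)"
        using u True unfolding gw_tree_def by auto
      then have "butlast u \<in> ?A" "last u < N (butlast u)"
        using u True bt take_in_gw_tree by (auto simp: last_conv_nth ne)
      moreover have "u = butlast u @ [last u]" using ne by simp
      ultimately show ?thesis by (auto intro!: image_eqI[where x="(butlast u, last u)"])
    qed (use u in auto)
  qed
  moreover have "finite (?A \<union> (\<lambda>(u, i). u @ [i]) ` Sigma ?A (\<lambda>u. {..<N u}))"
    using Suc by auto
  ultimately show ?case by (rule finite_subset)
qed

lemma desc_count_outside_tree:
  "u \<notin> gw_tree N \<Longrightarrow> desc_count N K n u = 0"
  unfolding desc_count_def by (intro sum.neutral) (metis (mono_tags) mem_Collect_eq indicator_simps(2) take_in_gw_tree)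

text \<open>Every vertex of depth \<open>n\<close> of the pruned tree contributes, through the telescoping
  sum of \<open>f\<close> along its ancestral line, exactly \<open>f [] - f w = 1\<close>.\<close>
lemma desc_count_root_telescope:
  assumes f0: "f [] = 1" and fn: "\<forall>u\<in>gw_tree N. length u = n \<longrightarrow> f u = 0"
  shows "desc_count N K n [] = (\<Sum>u\<in>nonroot_words K n. (f (butlast u) - f u) * desc_count N K n u)"
proof -
  let ?d = "\<lambda>u. f (butlast u) - f u"
  have telescope: "indicator (gw_tree N) w = (\<Sum>k\<in>{1..n}. indicator (gw_tree N) w * ?d (take k w))"
    if w: "w \<in> words K n" for w :: "nat list"
  proof (cases "w \<in> gw_tree N")
    case True
    have lw: "length w = n" using w by (simp add: words_def)
    have "(\<Sum>k\<in>{1..n}. ?d (take k w)) = (\<Sum>k\<in>{1..n}. f (take (k - 1) w) - f (take k w))"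
      using lw by (intro sum.cong) (auto simp: butlast_take)
    also have "\<dots> = f (take 0 w) - f (take n w)"
      by (induction n) (auto simp: sum.cl_ivl_Suc)
    also have "\<dots> = 1" using f0 fn True lw by simp
    finally show ?thesis using True by (simp add: sum_distrib_left[symmetric])
  qed simp
  have "desc_count N K n [] = (\<Sum>w\<in>words K n. \<Sum>k\<in>{1..n}. indicator (gw_tree N) w * ?d (take k w))"
    unfolding desc_count_def by (simp add: telescope cong: sum.cong)
  also have "\<dots> = (\<Sum>k\<in>{1..n}. \<Sum>u\<in>words K k. \<Sum>w\<in>{w\<in>words K n. take k w = u}.
      indicator (gw_tree N) w * ?d (take k w))"
    by (subst sum.swap) (intro sum.cong refl sum.group[symmetric], auto intro: take_in_words)
  also have "\<dots> = (\<Sum>k\<in>{1..n}. \<Sum>u\<in>words K k. ?d u * desc_count N K n u)"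
    unfolding desc_count_def sum_distrib_left
    by (intro sum.cong refl) (auto simp: words_def mult.commute)
  also have "\<dots> = (\<Sum>u\<in>nonroot_words K n. ?d u * desc_count N K n u)"
    by (simp add: sum_nonroot_words)
  finally show ?thesis .
qed

lemma flow_energy_agreeing_pairs:
  "flow_energy N r K n = (\<Sum>k\<in>{1..n}. \<Sum>(v, w)\<in>agreeing_pairs K n k.
     r (take k v) * indicator (gw_tree N) v * indicator (gw_tree N) w)"
proof -
  have level: "(\<Sum>u\<in>words K k. (desc_count N K n u)\<^sup>2 * r u) = (\<Sum>(v, w)\<in>agreeing_pairs K n k.
     r (take k v) * indicator (gw_tree N) v * indicator (gw_tree N) w)" if k: "k \<in> {1..n}" for k
  proof -
    let ?S = "\<lambda>u. {w\<in>words K n. take k w = u}"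
    let ?F = "\<lambda>(v, w). r (take k v) * indicator (gw_tree N) v * indicator (gw_tree N) w :: real"
    have "(\<Sum>vw\<in>agreeing_pairs K n k. ?F vw) =
        (\<Sum>u\<in>words K k. \<Sum>vw\<in>{vw\<in>agreeing_pairs K n k. take k (fst vw) = u}. ?F vw)"
      by (rule sum.group[of _ _ "\<lambda>vw. take k (fst vw)", symmetric], simp, simp)
        (use k in \<open>auto simp: agreeing_pairs_def intro: take_in_words\<close>)
    also have "\<dots> = (\<Sum>u\<in>words K k. \<Sum>vw\<in>?S u \<times> ?S u. ?F vw)"
      by (intro sum.cong refl arg_cong[where f="sum ?F"]) (auto simp: agreeing_pairs_def)
    also have "\<dots> = (\<Sum>u\<in>words K k. (desc_count N K n u)\<^sup>2 * r u)"
    proof (intro sum.cong refl)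
      fix u assume "u \<in> words K k"
      then have lu: "length u = k" by (simp add: words_def)
      have "(\<Sum>vw\<in>?S u \<times> ?S u. ?F vw) = (\<Sum>v\<in>?S u. \<Sum>w\<in>?S u.
          r u * (indicator (gw_tree N) v * indicator (gw_tree N) w))"
        by (subst sum.cartesian_product[symmetric]) (auto simp: mult.assoc intro!: sum.cong)
      also have "\<dots> = r u * (desc_count N K n u)\<^sup>2"
        unfolding desc_count_def lu power2_eq_square sum_product by (simp only: sum_distrib_left)
      finally show "(\<Sum>vw\<in>?S u \<times> ?S u. ?F vw) = (desc_count N K n u)\<^sup>2 * r u"
        by (simp only: mult.commute)
    qed
    finally show ?thesis by simp
  qed
  show ?thesis
    unfolding flow_energy_def sum_nonroot_words by (intro sum.cong refl level)
qed

text \<open>Cauchy-Schwarz applied to the telescoping identity.\<close>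
lemma desc_count_root_sq_le:
  assumes r: "\<And>u. 0 < r u" and f0: "f [] = 1"
    and fn: "\<forall>u\<in>gw_tree N. length u = n \<longrightarrow> f u = 0"
  shows "(desc_count N K n [])\<^sup>2 \<le> (\<Sum>u\<in>{u\<in>gw_tree N. 1 \<le> length u \<and> length u \<le> n}.
            (f u - f (butlast u))\<^sup>2 / r u) * flow_energy N r K n"
proof -
  let ?d = "\<lambda>u. f (butlast u) - f u"
  let ?Z = "desc_count N K n"
  let ?A = "nonroot_words K n \<inter> gw_tree N"
  let ?E = "{u\<in>gw_tree N. 1 \<le> length u \<and> length u \<le> n}"
  have r0: "0 \<le> r u" for u using r less_imp_le by blast
  have fE: "finite ?E" by (rule finite_subset[OF _ finite_gw_tree_levels[of N n]]) auto
  have "?Z [] = (\<Sum>u\<in>nonroot_words K n. ?d u * ?Z u)"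
    by (rule desc_count_root_telescope[OF f0 fn])
  also have "\<dots> = (\<Sum>u\<in>?A. ?d u * ?Z u)"
    by (rule sum.mono_neutral_right) (auto simp: desc_count_outside_tree)
  also have "\<dots> = (\<Sum>u\<in>?A. (?d u / sqrt (r u)) * (?Z u * sqrt (r u)))"
    using r by (intro sum.cong refl) (simp add: field_simps less_imp_neq[symmetric])
  finally have "(?Z [])\<^sup>2 \<le> (\<Sum>u\<in>?A. (?d u / sqrt (r u))\<^sup>2) * (\<Sum>u\<in>?A. (?Z u * sqrt (r u))\<^sup>2)"
    by (metis Cauchy_Schwarz_ineq_sum)
  also have "\<dots> = (\<Sum>u\<in>?A. (f u - f (butlast u))\<^sup>2 / r u) * (\<Sum>u\<in>?A. (?Z u)\<^sup>2 * r u)"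
    using r0 by (simp add: power_divide power_mult_distrib power2_commute)
  also have "\<dots> \<le> (\<Sum>u\<in>?E. (f u - f (butlast u))\<^sup>2 / r u) * flow_energy N r K n"
  proof (rule mult_mono)
    show "(\<Sum>u\<in>?A. (f u - f (butlast u))\<^sup>2 / r u) \<le> (\<Sum>u\<in>?E. (f u - f (butlast u))\<^sup>2 / r u)"
      by (rule sum_mono2[OF fE]) (auto simp: nonroot_words_def r0)
    show "(\<Sum>u\<in>?A. (?Z u)\<^sup>2 * r u) \<le> flow_energy N r K n"
      unfolding flow_energy_def by (rule sum_mono2) (auto simp: r0)
  qed (auto intro!: sum_nonneg simp: r0)
  finally show ?thesis .
qed

lemma eff_conductance_nonneg:
  assumes "\<And>u. 0 < r u" and "1 \<le> n"
  shows "0 \<le> eff_conductance N r n"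
proof -
  let ?S = "{f :: nat list \<Rightarrow> real. f [] = 1 \<and> (\<forall>u\<in>gw_tree N. length u = n \<longrightarrow> f u = 0)}"
  have "(\<lambda>u. if u = [] then 1 else 0) \<in> ?S" using assms(2) by auto
  then have "?S \<noteq> {}" by (metis empty_iff)
  then show ?thesis
    unfolding eff_conductance_def
    by (rule cINF_greatest) (intro sum_nonneg divide_nonneg_pos zero_le_power2 assms(1))
qed

lemma desc_count_root_sq_le_conductance:
  assumes r: "\<And>u. 0 < r u" and n: "1 \<le> n"
  shows "(desc_count N K n [])\<^sup>2 \<le> eff_conductance N r n * flow_energy N r K n"
proof -
  let ?S = "{f :: nat list \<Rightarrow> real. f [] = 1 \<and> (\<forall>u\<in>gw_tree N. length u = n \<longrightarrow> f u = 0)}"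
  let ?W = "flow_energy N r K n"
  have bound: "(desc_count N K n [])\<^sup>2 \<le> (\<Sum>u\<in>{u\<in>gw_tree N. 1 \<le> length u \<and> length u \<le> n}.
      (f u - f (butlast u))\<^sup>2 / r u) * ?W" if "f \<in> ?S" for f
    using desc_count_root_sq_le[OF r, of f] that by auto
  have W0: "0 \<le> ?W"
    unfolding flow_energy_def using r by (intro sum_nonneg mult_nonneg_nonneg) (auto intro: less_imp_le)
  have f0: "(\<lambda>u. if u = [] then 1 else 0 :: real) \<in> ?S" using n by auto
  show ?thesis
  proof (cases "?W = 0")
    case True
    then show ?thesis using bound[OF f0] by simp
  next
    case False
    then have W: "0 < ?W" using W0 by simp
    have "(desc_count N K n [])\<^sup>2 / ?W \<le> eff_conductance N r n"
      unfolding eff_conductance_def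
    proof (rule cINF_greatest)
      show "?S \<noteq> {}" using f0 by (metis empty_iff)
    next
      fix f assume "f \<in> ?S"
      then show "(desc_count N K n [])\<^sup>2 / ?W \<le> (\<Sum>u\<in>{u\<in>gw_tree N. 1 \<le> length u \<and> length u \<le> n}.
          (f u - f (butlast u))\<^sup>2 / r u)"
        using W bound by (simp add: pos_divide_le_eq)
    qed
    then show ?thesis using W by (simp add: pos_divide_le_eq mult.commute)
  qed
qed

section \<open>Probability that a finite set of words lies in the tree\<close>

definition proper_prefixes :: "nat list set \<Rightarrow> nat list set" where
  "proper_prefixes V = {take i y | y i. y \<in> V \<and> i < length y}"

definition children_suffice :: "nat list set \<Rightarrow> nat list \<Rightarrow> nat \<Rightarrow> bool" where
  "children_suffice V x a = (\<forall>y\<in>V. \<forall>i<length y. take i y = x \<longrightarrow> y ! i < a)"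

text \<open>For finite \<open>V\<close>, the probability that all words of \<open>V\<close> are vertices of the tree
  (see \<open>nn_integral_tree_indicators\<close>).\<close>
definition tree_prob :: "nat pmf \<Rightarrow> nat list set \<Rightarrow> real" where
  "tree_prob p V = (\<Prod>x\<in>proper_prefixes V. measure_pmf.prob p {a. children_suffice V x a})"

definition first_letters :: "nat list set \<Rightarrow> nat set" where
  "first_letters V = hd ` {y\<in>V. y \<noteq> []}"

definition suffixes_after :: "nat list set \<Rightarrow> nat \<Rightarrow> nat list set" where
  "suffixes_after V a = tl ` {y\<in>V. y \<noteq> [] \<and> hd y = a}"

definition tail_prob :: "nat pmf \<Rightarrow> nat \<Rightarrow> real" where
  "tail_prob p a = measure_pmf.prob p {c. a < c}"

lemma finite_proper_prefixes: "finite V \<Longrightarrow> finite (proper_prefixes V)"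
proof -
  assume V: "finite V"
  have "proper_prefixes V \<subseteq> (\<Union>y\<in>V. (\<lambda>i. take i y) ` {..<length y})"
    unfolding proper_prefixes_def by auto
  then show ?thesis by (rule finite_subset) (use V in auto)
qed

lemma proper_prefixes_split:
  "proper_prefixes V = (if first_letters V = {} then {} else {[]}) \<union>
     (\<Union>a\<in>first_letters V. (Cons a) ` proper_prefixes (suffixes_after V a))"
proof (intro equalityI subsetI)
  fix x assume "x \<in> proper_prefixes V"
  then obtain y i where y: "y \<in> V" "i < length y" "x = take i y"
    unfolding proper_prefixes_def by auto
  then obtain b z where yz: "y = b # z" by (cases y) auto
  then have b: "b \<in> first_letters V" and z: "z \<in> suffixes_after V b"
    using y unfolding first_letters_def suffixes_after_def by force+
  show "x \<in> (if first_letters V = {} then {} else {[]}) \<union>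
     (\<Union>a\<in>first_letters V. (Cons a) ` proper_prefixes (suffixes_after V a))"
  proof (cases i)
    case (Suc j)
    then have "x = b # take j z" "j < length z" using y yz by auto
    then show ?thesis using b z unfolding proper_prefixes_def by blast
  qed (use y b in auto)
next
  fix x assume x: "x \<in> (if first_letters V = {} then {} else {[]}) \<union>
     (\<Union>a\<in>first_letters V. (Cons a) ` proper_prefixes (suffixes_after V a))"
  show "x \<in> proper_prefixes V"
  proof (cases "x = [] \<and> first_letters V \<noteq> {}")
    case True
    then obtain y where "y \<in> V" "y \<noteq> []" unfolding first_letters_def by auto
    then show ?thesis using True unfolding proper_prefixes_def by (auto intro!: exI[of _ y] exI[of _ 0])
  next
    case False
    then obtain a z j where "z \<in> suffixes_after V a" "j < length z" "x = a # take j z"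
      using x unfolding proper_prefixes_def by (auto split: if_splits)
    then obtain y where "y \<in> V" "y = a # z" "x = take (Suc j) y" "Suc j < length y"
      unfolding suffixes_after_def by (auto simp: neq_Nil_conv)
    then show ?thesis unfolding proper_prefixes_def by blast
  qed
qed

lemma children_suffice_Nil: "children_suffice V [] = (\<lambda>c. \<forall>h\<in>first_letters V. h < c)"
  unfolding children_suffice_def first_letters_def by (force simp: fun_eq_iff neq_Nil_conv hd_conv_nth)

lemma children_suffice_Cons:
  "children_suffice V (a # x) = children_suffice (suffixes_after V a) x"
proof (rule ext, rule iffI)
  fix c
  assume H: "children_suffice V (a # x) c"
  show "children_suffice (suffixes_after V a) x c"
    unfolding children_suffice_def
  proof (intro ballI allI impI)
    fix z i assume z: "z \<in> suffixes_after V a" "i < length z" "take i z = x"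
    then have "a # z \<in> V" unfolding suffixes_after_def by (auto simp: neq_Nil_conv)
    then show "z ! i < c" using H z unfolding children_suffice_def by fastforce
  qed
next
  fix c
  assume H: "children_suffice (suffixes_after V a) x c"
  show "children_suffice V (a # x) c"
    unfolding children_suffice_def
  proof (intro ballI allI impI)
    fix y i assume y: "y \<in> V" "i < length y" "take i y = a # x"
    then obtain j z where "i = Suc j" "y = a # z" "take j z = x" "j < length z"
      by (cases i; cases y) auto
    moreover have "z \<in> suffixes_after V a"
      using y \<open>y = a # z\<close> unfolding suffixes_after_def by force
    ultimately show "y ! i < c" using H unfolding children_suffice_def by auto
  qed
qed

lemma children_suffice_not_prefix: "x \<notin> proper_prefixes V \<Longrightarrow> children_suffice V x a"
  unfolding children_suffice_def proper_prefixes_def by auto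

text \<open>Conditioning on the number of children of the root: the subtrees of its children
  are independent copies.\<close>
lemma tree_prob_rec:
  assumes V: "finite V"
  shows "tree_prob p V = (if first_letters V = {} then 1
            else measure_pmf.prob p {c. \<forall>h\<in>first_letters V. h < c}) *
          (\<Prod>a\<in>first_letters V. tree_prob p (suffixes_after V a))"
proof -
  let ?H = "first_letters V" and ?T = "suffixes_after V"
  let ?q = "\<lambda>x. measure_pmf.prob p {a. children_suffice V x a}"
  have fH: "finite ?H" using V unfolding first_letters_def by auto
  have fP: "finite (proper_prefixes (?T a))" for a
    using V unfolding suffixes_after_def by (intro finite_proper_prefixes) auto
  have "tree_prob p V = (\<Prod>x\<in>(if ?H = {} then {} else {[]}). ?q x) *
      (\<Prod>x\<in>(\<Union>a\<in>?H. (Cons a) ` proper_prefixes (?T a)). ?q x)"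
    unfolding tree_prob_def proper_prefixes_split[of V]
    by (rule prod.union_disjoint) (use fH fP in auto)
  also have "(\<Prod>x\<in>(\<Union>a\<in>?H. (Cons a) ` proper_prefixes (?T a)). ?q x) =
      (\<Prod>a\<in>?H. \<Prod>x\<in>proper_prefixes (?T a). ?q (a # x))"
    by (subst prod.UNION_disjoint) (use fH fP in \<open>auto simp: prod.reindex\<close>)
  finally show ?thesis
    by (simp add: tree_prob_def children_suffice_Nil children_suffice_Cons)
qed

lemma first_letters_empty [simp]: "first_letters {} = {}"
  by (simp add: first_letters_def)

lemma first_letters_insert [simp]:
  "first_letters (insert y V) = (if y = [] then first_letters V else insert (hd y) (first_letters V))"
  by (auto simp: first_letters_def)

lemma suffixes_after_empty [simp]: "suffixes_after {} a = {}"
  by (simp add: suffixes_after_def)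

lemma suffixes_after_insert [simp]: "suffixes_after (insert y V) a =
    (if y \<noteq> [] \<and> hd y = a then insert (tl y) (suffixes_after V a) else suffixes_after V a)"
  by (auto simp: suffixes_after_def)

lemma tree_prob_nonneg: "0 \<le> tree_prob p V"
  unfolding tree_prob_def by (auto intro!: prod_nonneg)

lemma tree_prob_Nil: "tree_prob p {[]} = 1"
  by (simp add: tree_prob_def proper_prefixes_def)

lemma tree_prob_Cons: "tree_prob p {a # w} = tail_prob p a * tree_prob p {w}"
  by (subst tree_prob_rec) (auto simp: tail_prob_def)

lemma tree_prob_Cons_same: "tree_prob p {a # v, a # w} = tail_prob p a * tree_prob p {v, w}"
  by (subst tree_prob_rec) (auto simp: tail_prob_def)

lemma tree_prob_Cons_distinct:
  assumes "a \<noteq> b"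
  shows "tree_prob p {a # v, b # w} = tail_prob p (max a b) * tree_prob p {v} * tree_prob p {w}"
proof -
  have "{c. \<forall>h\<in>{a, b}. h < c} = {c. max a b < c}" by auto
  then show ?thesis using assms by (subst tree_prob_rec) (auto simp: tail_prob_def)
qed

text \<open>\<open>trunc_mean p K = E[min \<nu> K]\<close> is the mean offspring number of the pruned tree, and
  \<open>trunc_pair_moment p K \<le> E[\<nu>\<^sup>2]\<close> counts ordered pairs of distinct surviving children.\<close>
definition trunc_mean :: "nat pmf \<Rightarrow> nat \<Rightarrow> real" where
  "trunc_mean p K = (\<Sum>a<K. tail_prob p a)"

definition trunc_pair_moment :: "nat pmf \<Rightarrow> nat \<Rightarrow> real" where
  "trunc_pair_moment p K = (\<Sum>a<K. \<Sum>b\<in>{..<K} - {a}. tail_prob p (max a b))"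

definition pair_tree_prob :: "nat pmf \<Rightarrow> nat \<Rightarrow> nat \<Rightarrow> nat \<Rightarrow> real" where
  "pair_tree_prob p K n k = (\<Sum>(v, w)\<in>agreeing_pairs K n k. tree_prob p {v, w})"

lemma tail_prob_nonneg: "0 \<le> tail_prob p a"
  by (simp add: tail_prob_def)

lemma trunc_mean_nonneg: "0 \<le> trunc_mean p K"
  unfolding trunc_mean_def by (intro sum_nonneg tail_prob_nonneg)

lemma trunc_pair_moment_nonneg: "0 \<le> trunc_pair_moment p K"
  unfolding trunc_pair_moment_def by (intro sum_nonneg tail_prob_nonneg)

lemma pair_tree_prob_nonneg: "0 \<le> pair_tree_prob p K n k"
  unfolding pair_tree_prob_def by (auto intro!: sum_nonneg tree_prob_nonneg)

lemma sum_tree_prob_words: "(\<Sum>w\<in>words K n. tree_prob p {w}) = trunc_mean p K ^ n"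
proof (induction n)
  case (Suc n)
  have "(\<Sum>w\<in>words K (Suc n). tree_prob p {w}) = (\<Sum>a<K. tail_prob p a * (\<Sum>w\<in>words K n. tree_prob p {w}))"
    by (simp add: sum_words_Suc tree_prob_Cons sum_distrib_left)
  then show ?case using Suc by (simp add: trunc_mean_def sum_distrib_right)
qed (simp add: words_0 tree_prob_Nil)

lemma agreeing_pairs_Suc_Suc:
  "agreeing_pairs K (Suc n) (Suc k) = (\<lambda>(a, v, w). (a # v, a # w)) ` ({..<K} \<times> agreeing_pairs K n k)"
proof (intro equalityI subsetI)
  fix x assume x: "x \<in> agreeing_pairs K (Suc n) (Suc k)"
  then obtain a v b w where "x = (a # v, b # w)" "a < K" "v \<in> words K n" "b < K" "w \<in> words K n"
    unfolding agreeing_pairs_def words_Suc by auto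
  moreover have "a = b" "take k v = take k w"
    using x calculation(1) unfolding agreeing_pairs_def by auto
  ultimately show "x \<in> (\<lambda>(a, v, w). (a # v, a # w)) ` ({..<K} \<times> agreeing_pairs K n k)"
    unfolding agreeing_pairs_def by (auto intro!: image_eqI[where x="(a, v, w)"])
qed (auto simp: agreeing_pairs_def words_def)

lemma pair_tree_prob_Suc_Suc: "pair_tree_prob p K (Suc n) (Suc k) = trunc_mean p K * pair_tree_prob p K n k"
proof -
  have "inj_on (\<lambda>(a, v, w). (a # v, a # w)) ({..<K} \<times> agreeing_pairs K n k)"
    by (auto simp: inj_on_def)
  then have "pair_tree_prob p K (Suc n) (Suc k) =
      (\<Sum>a<K. \<Sum>(v, w)\<in>agreeing_pairs K n k. tree_prob p {a # v, a # w})"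
    unfolding pair_tree_prob_def agreeing_pairs_Suc_Suc
    by (simp add: sum.reindex sum.cartesian_product case_prod_unfold)
  also have "\<dots> = (\<Sum>a<K. tail_prob p a * pair_tree_prob p K n k)"
    by (simp add: tree_prob_Cons_same pair_tree_prob_def sum_distrib_left case_prod_unfold)
  finally show ?thesis by (simp add: trunc_mean_def sum_distrib_right)
qed

lemma pair_tree_prob_shift:
  "k \<le> n \<Longrightarrow> pair_tree_prob p K n k = trunc_mean p K ^ k * pair_tree_prob p K (n - k) 0"
proof (induction k arbitrary: n)
  case (Suc k)
  then obtain n' where "n = Suc n'" by (cases n) auto
  then show ?case using Suc by (simp add: pair_tree_prob_Suc_Suc)
qed simp

lemma pair_tree_prob_0_0: "pair_tree_prob p K 0 0 = 1"
  by (simp add: pair_tree_prob_def agreeing_pairs_def words_0 tree_prob_Nil)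

text \<open>Two words of length \<open>n + 1\<close> either share their first letter, or branch apart at
  the root and are then independent.\<close>
lemma pair_tree_prob_Suc_0:
  "pair_tree_prob p K (Suc n) 0 =
     trunc_mean p K * pair_tree_prob p K n 0 + trunc_pair_moment p K * (trunc_mean p K ^ n)\<^sup>2"
proof -
  let ?S = "words K n"
  have pairs: "pair_tree_prob p K m 0 = (\<Sum>v\<in>words K m. \<Sum>w\<in>words K m. tree_prob p {v, w})" for m
    by (simp add: pair_tree_prob_def agreeing_pairs_def sum.cartesian_product)
  let ?G = "\<lambda>a b. \<Sum>v\<in>?S. \<Sum>w\<in>?S. tree_prob p {a # v, b # w}"
  have same: "?G a a = tail_prob p a * pair_tree_prob p K n 0" for a
    by (simp add: pairs tree_prob_Cons_same sum_distrib_left)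
  have distinct: "?G a b = tail_prob p (max a b) * (trunc_mean p K ^ n)\<^sup>2" if "a \<noteq> b" for a b
  proof -
    have "?G a b = tail_prob p (max a b) * ((\<Sum>v\<in>?S. tree_prob p {v}) * (\<Sum>w\<in>?S. tree_prob p {w}))"
      unfolding sum_product using that by (simp add: tree_prob_Cons_distinct sum_distrib_left mult.assoc)
    then show ?thesis by (simp add: sum_tree_prob_words power2_eq_square)
  qed
  have "pair_tree_prob p K (Suc n) 0 = (\<Sum>a<K. \<Sum>b<K. ?G a b)"
    unfolding pairs sum_words_Suc by (intro sum.cong refl) (rule sum.swap)
  also have "\<dots> = (\<Sum>a<K. ?G a a + (\<Sum>b\<in>{..<K} - {a}. ?G a b))"
    by (intro sum.cong refl) (simp add: sum.remove)
  also have "\<dots> = trunc_mean p K * pair_tree_prob p K n 0 + trunc_pair_moment p K * (trunc_mean p K ^ n)\<^sup>2"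
    by (simp add: same distinct sum.distrib trunc_mean_def trunc_pair_moment_def sum_distrib_right)
  finally show ?thesis .
qed

lemma pair_tree_prob_0_le:
  assumes m1: "1 < m" and mK: "trunc_mean p K \<le> m" and sK: "trunc_pair_moment p K \<le> s"
  shows "pair_tree_prob p K n 0 \<le> (1 + s / (m * (m - 1))) * m ^ (2 * n)"
proof -
  define t where "t = s / (m * (m - 1))"
  have s: "t * (m * (m - 1)) = s" using m1 by (simp add: t_def)
  have s0: "0 \<le> s" using sK trunc_pair_moment_nonneg[of p K] by linarith
  have t0: "0 \<le> t" using s0 m1 unfolding t_def by (intro divide_nonneg_pos) auto
  show ?thesis
    unfolding t_def[symmetric]
  proof (induction n)
    case 0
    then show ?case using t0 by (simp add: pair_tree_prob_0_0)
  next
    case (Suc n)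
    have "trunc_mean p K * pair_tree_prob p K n 0 \<le> m * ((1 + t) * m ^ (2 * n))"
      using Suc mK m1 by (intro mult_mono) (auto simp: trunc_mean_nonneg pair_tree_prob_nonneg)
    moreover have "trunc_pair_moment p K * (trunc_mean p K ^ n)\<^sup>2 \<le> s * (m ^ n)\<^sup>2"
      using sK mK s0 by (intro mult_mono power_mono) (auto simp: trunc_mean_nonneg trunc_pair_moment_nonneg)
    ultimately have "pair_tree_prob p K (Suc n) 0 \<le> m * ((1 + t) * m ^ (2 * n)) + s * (m ^ n)\<^sup>2"
      unfolding pair_tree_prob_Suc_0 by linarith
    also have "\<dots> = (m + t * m\<^sup>2) * m ^ (2 * n)"
      unfolding power_even_eq s[symmetric] by (simp add: power2_eq_square algebra_simps)
    also have "\<dots> \<le> (1 + t) * m ^ (2 * Suc n)"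
      using m1 t0 by (simp add: power_add power2_eq_square algebra_simps)
    finally show ?case .
  qed
qed

lemma pair_tree_prob_le:
  assumes m1: "1 < m" and mK: "trunc_mean p K \<le> m" and sK: "trunc_pair_moment p K \<le> s"
    and k: "k \<le> n"
  shows "m ^ k * pair_tree_prob p K n k \<le> (1 + s / (m * (m - 1))) * m ^ (2 * n)"
proof -
  have "trunc_mean p K ^ k * pair_tree_prob p K (n - k) 0 \<le> m ^ k * ((1 + s / (m * (m - 1))) * m ^ (2 * (n - k)))"
    using mK m1 by (intro mult_mono power_mono pair_tree_prob_0_le[OF m1 mK sK])
      (auto simp: trunc_mean_nonneg pair_tree_prob_nonneg)
  then have "m ^ k * pair_tree_prob p K n k \<le> m ^ k * (m ^ k * ((1 + s / (m * (m - 1))) * m ^ (2 * (n - k))))"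
    unfolding pair_tree_prob_shift[OF k] using m1 by (simp add: mult.assoc)
  also have "\<dots> = (1 + s / (m * (m - 1))) * m ^ (k + k + 2 * (n - k))"
    by (simp only: power_add ac_simps)
  also have "k + k + 2 * (n - k) = 2 * n" using k by simp
  finally show ?thesis .
qed

lemma indicator_less_sum: "(\<Sum>a<K. indicator {a<..} c :: real) = real (min c K)"
  by (induction K) (auto simp: min_def)

lemma tail_prob_eq_expectation: "tail_prob p a = measure_pmf.expectation p (indicator {a<..})"
  by (simp add: tail_prob_def greaterThan_def)

lemma trunc_mean_eq: "trunc_mean p K = measure_pmf.expectation p (\<lambda>c. real (min c K))"
  unfolding trunc_mean_def tail_prob_eq_expectation indicator_less_sum[symmetric]
  by (rule Bochner_Integration.integral_sum[symmetric]) (auto intro!: measure_pmf.integrable_const_bound[where B=1])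

lemma trunc_mean_le_offspring_mean:
  assumes "integrable (measure_pmf p) real"
  shows "trunc_mean p K \<le> offspring_mean p"
  unfolding trunc_mean_eq offspring_mean_def
  by (rule integral_mono) (auto intro!: measure_pmf.integrable_const_bound[where B="real K"] assms)

lemma trunc_mean_tendsto_offspring_mean:
  assumes "integrable (measure_pmf p) real"
  shows "(\<lambda>K. trunc_mean p K) \<longlonglongrightarrow> offspring_mean p"
  unfolding trunc_mean_eq offspring_mean_def
proof (rule integral_dominated_convergence[where w=real])
  show "AE x in measure_pmf p. (\<lambda>K. real (min x K)) \<longlonglongrightarrow> real x"
  proof (intro AE_I2 tendsto_eventually)
    fix x :: nat
    show "\<forall>\<^sub>F K in sequentially. real (min x K) = real x"
      by (rule eventually_sequentiallyI[of x]) simp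
  qed
qed (use assms in auto)

lemma trunc_pair_moment_le:
  assumes "integrable (measure_pmf p) (\<lambda>k. (real k)\<^sup>2)"
  shows "trunc_pair_moment p K \<le> measure_pmf.expectation p (\<lambda>k. (real k)\<^sup>2)"
proof -
  let ?g = "\<lambda>a b. indicator {max a b<..} :: nat \<Rightarrow> real"
  have int: "integrable (measure_pmf p) (?g a b)" for a b
    by (rule measure_pmf.integrable_const_bound[where B=1]) auto
  have "trunc_pair_moment p K =
      measure_pmf.expectation p (\<lambda>c. \<Sum>a<K. \<Sum>b\<in>{..<K} - {a}. ?g a b c)"
    unfolding trunc_pair_moment_def tail_prob_eq_expectation
    by (subst Bochner_Integration.integral_sum, intro Bochner_Integration.integrable_sum int)
      (intro sum.cong refl Bochner_Integration.integral_sum[symmetric] int)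
  also have "\<dots> \<le> measure_pmf.expectation p (\<lambda>k. (real k)\<^sup>2)"
  proof (rule integral_mono)
    fix c :: nat
    have "(\<Sum>b\<in>{..<K} - {a}. ?g a b c) \<le> (\<Sum>b<K. indicator {a<..} c * indicator {b<..} c)" for a
    proof -
      have "(\<Sum>b\<in>{..<K} - {a}. ?g a b c) = (\<Sum>b\<in>{..<K} - {a}. indicator {a<..} c * indicator {b<..} c)"
        by (intro sum.cong) (auto simp: indicator_def)
      also have "\<dots> \<le> (\<Sum>b<K. indicator {a<..} c * indicator {b<..} c)"
        by (rule sum_mono2) auto
      finally show ?thesis .
    qed
    then have "(\<Sum>a<K. \<Sum>b\<in>{..<K} - {a}. ?g a b c) \<le> (\<Sum>a<K. \<Sum>b<K. indicator {a<..} c * indicator {b<..} c)"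
      by (rule sum_mono)
    also have "\<dots> = (real (min c K))\<^sup>2"
      unfolding sum_product[symmetric] indicator_less_sum by (simp add: power2_eq_square)
    also have "\<dots> \<le> (real c)\<^sup>2" by (simp add: power_mono)
    finally show "(\<Sum>a<K. \<Sum>b\<in>{..<K} - {a}. ?g a b c) \<le> (real c)\<^sup>2" .
  qed (intro Bochner_Integration.integrable_sum int assms)+
  finally show ?thesis .
qed

section \<open>Expectations over the Galton-Watson sample space\<close>

lemma nn_integral_PiM_prod_components:
  fixes P :: "'b measure" and g :: "'a \<Rightarrow> 'b \<Rightarrow> ennreal"
  assumes P: "prob_space P" and J: "finite J" and g: "\<And>x. x \<in> J \<Longrightarrow> g x \<in> borel_measurable P"
  shows "(\<integral>\<^sup>+\<omega>. (\<Prod>x\<in>J. g x (\<omega> x)) \<partial>PiM UNIV (\<lambda>_. P)) = (\<Prod>x\<in>J. integral\<^sup>N P (g x))"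
proof -
  interpret prob_space P by (rule P)
  interpret PS: product_prob_space "\<lambda>_. P" UNIV by unfold_locales
  have meas: "(\<lambda>y. \<Prod>x\<in>J. g x (y x)) \<in> borel_measurable (PiM J (\<lambda>_. P))"
  proof (rule borel_measurable_prod_ennreal)
    fix x assume "x \<in> J"
    then show "(\<lambda>y. g x (y x)) \<in> borel_measurable (PiM J (\<lambda>_. P))"
      using g by (intro measurable_compose[OF measurable_component_singleton]) auto
  qed
  have "(\<integral>\<^sup>+\<omega>. (\<Prod>x\<in>J. g x (\<omega> x)) \<partial>PiM UNIV (\<lambda>_. P)) =
        (\<integral>\<^sup>+\<omega>. (\<Prod>x\<in>J. g x (restrict \<omega> J x)) \<partial>PiM UNIV (\<lambda>_. P))"
    by (intro nn_integral_cong prod.cong) auto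
  also have "\<dots> = (\<integral>\<^sup>+y. (\<Prod>x\<in>J. g x (y x)) \<partial>distr (PiM UNIV (\<lambda>_. P)) (PiM J (\<lambda>_. P)) (\<lambda>\<omega>. restrict \<omega> J))"
    by (rule nn_integral_distr[symmetric], rule measurable_restrict_subset, simp) (simp add: meas)
  also have "distr (PiM UNIV (\<lambda>_. P)) (PiM J (\<lambda>_. P)) (\<lambda>\<omega>. restrict \<omega> J) = PiM J (\<lambda>_. P)"
    by (rule PS.distr_PiM_restrict_finite) (use J in auto)
  also have "(\<integral>\<^sup>+y. (\<Prod>x\<in>J. g x (y x)) \<partial>PiM J (\<lambda>_. P)) = (\<Prod>x\<in>J. integral\<^sup>N P (g x))"
    by (rule PS.product_nn_integral_prod) (use J g in auto)
  finally show ?thesis .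
qed

lemma nn_integral_pair_measure_mult:
  fixes h1 :: "'a \<Rightarrow> ennreal" and h2 :: "'b \<Rightarrow> ennreal"
  assumes "prob_space X" and "h2 \<in> borel_measurable X"
  shows "(\<integral>\<^sup>+z. h1 (fst z) * h2 (snd z) \<partial>(measure_pmf p \<Otimes>\<^sub>M X)) =
    (\<integral>\<^sup>+a. h1 a \<partial>measure_pmf p) * (\<integral>\<^sup>+b. h2 b \<partial>X)"
proof -
  interpret prob_space X by fact
  have "(\<lambda>z. h1 (fst z)) \<in> borel_measurable (measure_pmf p \<Otimes>\<^sub>M X)"
    by (rule measurable_compose[OF measurable_fst]) simp
  moreover have "(\<lambda>z. h2 (snd z)) \<in> borel_measurable (measure_pmf p \<Otimes>\<^sub>M X)"
    by (rule measurable_compose[OF measurable_snd assms(2)])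
  ultimately have meas: "(\<lambda>z. h1 (fst z) * h2 (snd z)) \<in> borel_measurable (measure_pmf p \<Otimes>\<^sub>M X)"
    by (rule borel_measurable_times_ennreal)
  have "(\<integral>\<^sup>+z. h1 (fst z) * h2 (snd z) \<partial>(measure_pmf p \<Otimes>\<^sub>M X)) =
      (\<integral>\<^sup>+a. \<integral>\<^sup>+b. h1 a * h2 b \<partial>X \<partial>measure_pmf p)"
    using nn_integral_fst[OF meas] by simp
  also have "\<dots> = (\<integral>\<^sup>+a. h1 a * (\<integral>\<^sup>+b. h2 b \<partial>X) \<partial>measure_pmf p)"
    by (intro nn_integral_cong nn_integral_cmult assms(2))
  finally show ?thesis by (simp add: nn_integral_multc)
qed

lemma measurable_gw_space_component:
  "(\<lambda>\<omega>. \<omega> u) \<in> measurable (gw_space p X) (measure_pmf p \<Otimes>\<^sub>M X)"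
  unfolding gw_space_def by (rule measurable_component_singleton) simp

lemma borel_measurable_children:
  "(\<lambda>\<omega>. h (fst (\<omega> u)) :: real) \<in> borel_measurable (gw_space p X)"
  by (rule measurable_compose[OF measurable_gw_space_component]) simp

lemma borel_measurable_weight:
  fixes h :: "real \<Rightarrow> real"
  assumes "sets X = sets borel" and "h \<in> borel_measurable borel"
  shows "(\<lambda>\<omega>. h (snd (\<omega> u))) \<in> borel_measurable (gw_space p X)"
proof (rule measurable_compose[OF measurable_gw_space_component])
  have "h \<in> borel_measurable X" using assms(2) by (subst measurable_cong_sets[OF assms(1) refl])
  then show "(\<lambda>z. h (snd z)) \<in> borel_measurable (measure_pmf p \<Otimes>\<^sub>M X)"
    by (rule measurable_compose[OF measurable_snd])
qed

lemma borel_measurable_gw_tree_indicator: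
  "(\<lambda>\<omega>. indicator (gw_tree (\<lambda>u. fst (\<omega> u))) w :: real) \<in> borel_measurable (gw_space p X)"
  unfolding indicator_gw_tree_eq_prod by (intro borel_measurable_prod borel_measurable_children)

lemma prod_of_bool: "finite A \<Longrightarrow> (\<Prod>x\<in>A. of_bool (P x) :: 'a :: comm_semiring_1) = of_bool (\<forall>x\<in>A. P x)"
  by (induction A rule: finite_induct) auto

lemma subset_gw_tree_iff_children_suffice:
  assumes "proper_prefixes V \<subseteq> J"
  shows "V \<subseteq> gw_tree N \<longleftrightarrow> (\<forall>x\<in>J. children_suffice V x (N x))"
proof
  assume "V \<subseteq> gw_tree N"
  then show "\<forall>x\<in>J. children_suffice V x (N x)"
    unfolding children_suffice_def gw_tree_def by auto
next
  assume H: "\<forall>x\<in>J. children_suffice V x (N x)"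
  show "V \<subseteq> gw_tree N"
    unfolding gw_tree_def
  proof (intro subsetI CollectI allI impI)
    fix y k assume y: "y \<in> V" "k < length y"
    then have "take k y \<in> J" using assms unfolding proper_prefixes_def by blast
    then show "y ! k < N (take k y)" using H y unfolding children_suffice_def by blast
  qed
qed

text \<open>The event that \<open>V\<close> lies in the tree is the intersection of the events
  \<open>children_suffice V x (N x)\<close> over the prefixes \<open>x\<close>, which are independent of each other
  and of the weights.\<close>
lemma nn_integral_tree_indicators:
  assumes X: "prob_space X" "sets X = sets borel"
    and V: "finite V" and J: "finite J" and sub: "proper_prefixes V \<subseteq> J"
    and c: "\<And>x. c x \<in> borel_measurable borel" "\<And>x b. 0 \<le> c x b"
    and Ec: "\<And>x. (\<integral>\<^sup>+b. ennreal (c x b) \<partial>X) = ennreal (Ec x)" "\<And>x. 0 \<le> Ec x"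
  shows "(\<integral>\<^sup>+\<omega>. ennreal ((\<Prod>x\<in>J. c x (snd (\<omega> x))) *
            (\<Prod>y\<in>V. indicator (gw_tree (\<lambda>u. fst (\<omega> u))) y)) \<partial>gw_space p X)
          = ennreal ((\<Prod>x\<in>J. Ec x) * tree_prob p V)"
proof -
  let ?A = "\<lambda>x. {a. children_suffice V x a}"
  let ?g = "\<lambda>x z. ennreal (c x (snd z) * indicator (?A x) (fst z))"
  have cX: "c x \<in> borel_measurable X" for x using c(1) by (subst measurable_cong_sets[OF X(2) refl])
  have "(\<Prod>y\<in>V. indicator (gw_tree N) y) = (\<Prod>x\<in>J. indicator (?A x) (N x) :: real)" for N
    using subset_gw_tree_iff_children_suffice[OF sub, of N]
    by (simp add: indicator_def prod_of_bool V J subset_iff) blast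
  then have "(\<integral>\<^sup>+\<omega>. ennreal ((\<Prod>x\<in>J. c x (snd (\<omega> x))) *
        (\<Prod>y\<in>V. indicator (gw_tree (\<lambda>u. fst (\<omega> u))) y)) \<partial>gw_space p X)
      = (\<integral>\<^sup>+\<omega>. (\<Prod>x\<in>J. ?g x (\<omega> x)) \<partial>gw_space p X)"
    using c(2) by (simp add: prod.distrib[symmetric] prod_ennreal)
  also have "\<dots> = (\<Prod>x\<in>J. integral\<^sup>N (measure_pmf p \<Otimes>\<^sub>M X) (?g x))"
    unfolding gw_space_def
  proof (rule nn_integral_PiM_prod_components[OF _ J])
    show "prob_space (measure_pmf p \<Otimes>\<^sub>M X)"
      using X(1) by (intro prob_space_pair) (auto simp: measure_pmf.prob_space_axioms)
  qed (use cX in measurable)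
  also have "\<dots> = (\<Prod>x\<in>J. ennreal (measure_pmf.prob p (?A x) * Ec x))"
  proof (rule prod.cong[OF refl])
    fix x
    have "integral\<^sup>N (measure_pmf p \<Otimes>\<^sub>M X) (?g x) =
        (\<integral>\<^sup>+z. indicator (?A x) (fst z) * ennreal (c x (snd z)) \<partial>(measure_pmf p \<Otimes>\<^sub>M X))"
      using c(2) by (intro nn_integral_cong) (simp add: ennreal_mult' ennreal_indicator mult.commute)
    also have "\<dots> = emeasure (measure_pmf p) (?A x) * ennreal (Ec x)"
      by (subst nn_integral_pair_measure_mult[OF X(1)]) (use cX Ec(1) in simp_all)
    finally show "integral\<^sup>N (measure_pmf p \<Otimes>\<^sub>M X) (?g x) = ennreal (measure_pmf.prob p (?A x) * Ec x)"
      using Ec(2) by (simp add: ennreal_mult measure_pmf.emeasure_eq_measure)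
  qed
  also have "(\<Prod>x\<in>J. measure_pmf.prob p (?A x)) = tree_prob p V"
    unfolding tree_prob_def
    by (rule prod.mono_neutral_right[OF J sub]) (simp add: children_suffice_not_prefix)
  then have "(\<Prod>x\<in>J. ennreal (measure_pmf.prob p (?A x) * Ec x)) = ennreal ((\<Prod>x\<in>J. Ec x) * tree_prob p V)"
    using Ec(2) by (simp add: prod_ennreal prod.distrib mult.commute)
  finally show ?thesis .
qed

lemma nn_integral_desc_count_root:
  assumes X: "prob_space X" "sets X = sets borel"
  shows "(\<integral>\<^sup>+\<omega>. ennreal (desc_count (\<lambda>u. fst (\<omega> u)) K n []) \<partial>gw_space p X) = ennreal (trunc_mean p K ^ n)"
proof -
  interpret X: prob_space X by (rule X(1))
  have "(\<integral>\<^sup>+\<omega>. ennreal (desc_count (\<lambda>u. fst (\<omega> u)) K n []) \<partial>gw_space p X) =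
      (\<integral>\<^sup>+\<omega>. (\<Sum>w\<in>words K n. ennreal (indicator (gw_tree (\<lambda>u. fst (\<omega> u))) w)) \<partial>gw_space p X)"
    by (intro nn_integral_cong) (simp add: desc_count_def sum_ennreal)
  also have "\<dots> = (\<Sum>w\<in>words K n. \<integral>\<^sup>+\<omega>. ennreal (indicator (gw_tree (\<lambda>u. fst (\<omega> u))) w) \<partial>gw_space p X)"
    by (intro nn_integral_sum measurable_compose[OF borel_measurable_gw_tree_indicator measurable_ennreal])
  also have "\<dots> = (\<Sum>w\<in>words K n. ennreal (tree_prob p {w}))"
  proof (rule sum.cong[OF refl])
    fix w
    have "(\<integral>\<^sup>+\<omega>. ennreal ((\<Prod>x\<in>proper_prefixes {w}. 1) *
        (\<Prod>y\<in>{w}. indicator (gw_tree (\<lambda>u. fst (\<omega> u))) y)) \<partial>gw_space p X) =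
        ennreal ((\<Prod>x\<in>proper_prefixes {w}. 1) * tree_prob p {w})"
      by (rule nn_integral_tree_indicators[OF X, where c="\<lambda>_ _. 1"])
        (auto simp: finite_proper_prefixes X.emeasure_space_1)
    then show "(\<integral>\<^sup>+\<omega>. ennreal (indicator (gw_tree (\<lambda>u. fst (\<omega> u))) w) \<partial>gw_space p X) =
        ennreal (tree_prob p {w})" by simp
  qed
  also have "\<dots> = ennreal (trunc_mean p K ^ n)"
    by (simp add: sum_ennreal tree_prob_nonneg sum_tree_prob_words)
  finally show ?thesis .
qed

text \<open>The negative part of the weight is cut off so that the integrand is a nonnegative
  function on the whole sample space; almost surely this changes nothing.\<close>
lemma nn_integral_weight_pair_indicators:
  assumes X: "prob_space X" "sets X = sets borel"
    and EX: "(\<integral>\<^sup>+b. ennreal b \<partial>X) = ennreal E" and E0: "0 \<le> E" and c: "0 \<le> c"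
  shows "(\<integral>\<^sup>+\<omega>. ennreal (c * max (snd (\<omega> x)) 0 * indicator (gw_tree (\<lambda>u. fst (\<omega> u))) v *
      indicator (gw_tree (\<lambda>u. fst (\<omega> u))) w) \<partial>gw_space p X) = ennreal (c * E * tree_prob p {v, w})"
proof -
  interpret X: prob_space X by (rule X(1))
  let ?ind = "\<lambda>\<omega> v. indicator (gw_tree (\<lambda>u. fst (\<omega> u))) v :: real"
  let ?J = "insert x (proper_prefixes {v, w})"
  have fJ: "finite ?J" by (simp add: finite_proper_prefixes)
  have mX: "ennreal \<in> borel_measurable X"
    by (subst measurable_cong_sets[OF X(2) refl]) simp
  have pair: "(\<Prod>y\<in>{v, w}. ?ind \<omega> y) = ?ind \<omega> v * ?ind \<omega> w" for \<omega>
    by (cases "v = w") (auto simp: indicator_def)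
  have "(\<integral>\<^sup>+\<omega>. ennreal (c * max (snd (\<omega> x)) 0 * ?ind \<omega> v * ?ind \<omega> w) \<partial>gw_space p X) =
      (\<integral>\<^sup>+\<omega>. ennreal ((\<Prod>y\<in>?J. if y = x then c * max (snd (\<omega> y)) 0 else 1) *
        (\<Prod>y\<in>{v, w}. ?ind \<omega> y)) \<partial>gw_space p X)"
    using fJ by (intro nn_integral_cong) (simp add: pair prod.delta mult.assoc)
  also have "\<dots> = ennreal ((\<Prod>y\<in>?J. if y = x then c * E else 1) * tree_prob p {v, w})"
  proof (rule nn_integral_tree_indicators[OF X])
    fix y show "(\<integral>\<^sup>+b. ennreal (if y = x then c * max b 0 else 1) \<partial>X) = ennreal (if y = x then c * E else 1)"
      using c EX E0 by (simp add: ennreal_mult nn_integral_cmult[OF mX] X.emeasure_space_1)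
  qed (use c E0 fJ in \<open>auto simp: finite_proper_prefixes\<close>)
  finally show ?thesis using fJ by (simp add: prod.delta mult.assoc)
qed

lemma nn_integral_flow_energy:
  assumes X: "prob_space X" "sets X = sets borel" and pos: "AE x in X. 0 < x"
    and int: "integrable X (\<lambda>x. x)" and m: "0 \<le> m"
  shows "(\<integral>\<^sup>+\<omega>. ennreal (flow_energy (\<lambda>u. fst (\<omega> u)) (\<lambda>u. m ^ length u * max (snd (\<omega> u)) 0) K n)
      \<partial>gw_space p X) = ennreal (integral\<^sup>L X (\<lambda>x. x) * (\<Sum>k\<in>{1..n}. m ^ k * pair_tree_prob p K n k))"
proof -
  define E where "E = integral\<^sup>L X (\<lambda>x. x)"
  have E0: "0 \<le> E" unfolding E_def using pos by (intro integral_nonneg_AE) (auto elim: AE_mp)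
  have EX: "(\<integral>\<^sup>+b. ennreal b \<partial>X) = ennreal E"
    unfolding E_def by (rule nn_integral_eq_integral[OF int]) (use pos in \<open>auto elim: AE_mp\<close>)
  let ?ind = "\<lambda>\<omega> v. indicator (gw_tree (\<lambda>u. fst (\<omega> u))) v :: real"
  let ?F = "\<lambda>k \<omega> (v, w). m ^ length (take k v) * max (snd (\<omega> (take k v))) 0 * ?ind \<omega> v * ?ind \<omega> w"
  have F0: "0 \<le> ?F k \<omega> vw" for k \<omega> vw
    using m by (auto simp: case_prod_unfold)
  have measF: "(\<lambda>\<omega>. ennreal (?F k \<omega> vw)) \<in> borel_measurable (gw_space p X)" for k vw
    unfolding case_prod_unfold
    by (intro measurable_compose[OF _ measurable_ennreal] borel_measurable_times borel_measurable_const
        borel_measurable_gw_tree_indicator borel_measurable_weight[OF X(2)]) simp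
  have termE: "(\<integral>\<^sup>+\<omega>. ennreal (?F k \<omega> vw) \<partial>gw_space p X) = ennreal (m ^ k * E * tree_prob p {fst vw, snd vw})"
    if "vw \<in> agreeing_pairs K n k" and "k \<le> n" for k vw
  proof -
    have "length (take k (fst vw)) = k"
      using that by (auto simp: agreeing_pairs_def words_def)
    then show ?thesis
      using nn_integral_weight_pair_indicators[OF X EX E0, of "m ^ k"] m by (simp add: case_prod_unfold)
  qed
  have "(\<integral>\<^sup>+\<omega>. ennreal (flow_energy (\<lambda>u. fst (\<omega> u)) (\<lambda>u. m ^ length u * max (snd (\<omega> u)) 0) K n)
      \<partial>gw_space p X) = (\<integral>\<^sup>+\<omega>. (\<Sum>k\<in>{1..n}. \<Sum>vw\<in>agreeing_pairs K n k. ennreal (?F k \<omega> vw)) \<partial>gw_space p X)"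
    unfolding flow_energy_agreeing_pairs by (simp only: sum_ennreal F0 sum_nonneg)
  also have "\<dots> = (\<Sum>k\<in>{1..n}. \<Sum>vw\<in>agreeing_pairs K n k. \<integral>\<^sup>+\<omega>. ennreal (?F k \<omega> vw) \<partial>gw_space p X)"
    by (simp only: nn_integral_sum measF borel_measurable_sum)
  also have "\<dots> = (\<Sum>k\<in>{1..n}. \<Sum>vw\<in>agreeing_pairs K n k. ennreal (m ^ k * E * tree_prob p {fst vw, snd vw}))"
    by (intro sum.cong refl termE) auto
  also have "\<dots> = ennreal (\<Sum>k\<in>{1..n}. \<Sum>vw\<in>agreeing_pairs K n k. m ^ k * E * tree_prob p {fst vw, snd vw})"
    using m E0 by (simp only: sum_ennreal sum_nonneg mult_nonneg_nonneg zero_le_power tree_prob_nonneg)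
  also have "\<dots> = ennreal (E * (\<Sum>k\<in>{1..n}. m ^ k * pair_tree_prob p K n k))"
    by (simp add: sum_distrib_left pair_tree_prob_def case_prod_unfold mult_ac)
  finally show ?thesis unfolding E_def .
qed

lemma AE_gw_space_weights_pos:
  assumes X: "prob_space X" "sets X = sets borel" and pos: "AE x in X. 0 < x"
  shows "AE \<omega> in gw_space p X. \<forall>u. 0 < snd (\<omega> u)"
proof -
  interpret X: prob_space X by (rule X(1))
  interpret PP: pair_sigma_finite "measure_pmf p" X by unfold_locales
  have "prob_space (measure_pmf p \<Otimes>\<^sub>M X)"
    by (intro prob_space_pair) (auto simp: measure_pmf.prob_space_axioms X(1))
  then interpret PS: product_prob_space "\<lambda>_. measure_pmf p \<Otimes>\<^sub>M X" UNIV
    unfolding product_prob_space_def product_prob_space_axioms_def product_sigma_finite_def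
    by (auto simp: prob_space_imp_sigma_finite)
  have "(\<lambda>x. x) \<in> borel_measurable X" by (subst measurable_cong_sets[OF X(2) refl]) simp
  then have "AE z in measure_pmf p \<Otimes>\<^sub>M X. 0 < snd z"
  proof (intro PP.AE_pair_measure)
    show "AE x in measure_pmf p. AE y in X. 0 < snd (x, y)" using pos by simp
  qed (use \<open>(\<lambda>x. x) \<in> borel_measurable X\<close> in measurable)
  then have "AE \<omega> in gw_space p X. 0 < snd (\<omega> u)" for u
    unfolding gw_space_def by (intro PS.AE_component) auto
  then show ?thesis by (simp add: AE_all_countable)
qed

lemma amgm_sq_div:
  fixes z w g t :: real
  assumes w: "0 \<le> w" and g: "0 \<le> g" and zwg: "z\<^sup>2 \<le> g * w" and t: "0 < t"
  shows "z \<le> t / 2 * (z\<^sup>2 / w) + w / (2 * t)" and "z\<^sup>2 / w \<le> g"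
proof -
  show "z\<^sup>2 / w \<le> g"
    using w g zwg by (cases "w = 0") (simp_all add: pos_divide_le_eq mult.commute)
  show "z \<le> t / 2 * (z\<^sup>2 / w) + w / (2 * t)"
  proof (cases "w = 0")
    case False
    then have w: "0 < w" using w by simp
    have "2 * t * w * z \<le> t\<^sup>2 * z\<^sup>2 + w\<^sup>2"
      using sum_squares_ge_zero[of "t * z - w" 0] by (simp add: power2_eq_square algebra_simps)
    also have "\<dots> = (2 * t * w) * (t / 2 * (z\<^sup>2 / w) + w / (2 * t))"
      using t w by (simp add: field_simps power2_eq_square)
    finally show ?thesis using t w by (simp add: mult_le_cancel_left_pos)
  qed (use zwg in simp)
qed

lemma ennreal_div_le_of_le_mult_add_half:
  fixes I :: ennreal
  assumes le: "ennreal A \<le> ennreal (t / 2) * I + ennreal (A / 2)" and A: "0 < A" and t: "0 < t"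
  shows "ennreal (A / t) \<le> I"
proof (cases I rule: ennreal_cases)
  case (real r)
  have "ennreal (t / 2) * I + ennreal (A / 2) = ennreal (t / 2 * r + A / 2)"
    using real t A by (simp add: ennreal_plus[symmetric] ennreal_mult[symmetric] del: ennreal_plus)
  with le have "ennreal A \<le> ennreal (t / 2 * r + A / 2)" by (rule ord_le_eq_trans)
  then have "A \<le> t / 2 * r + A / 2"
    using real t A by (subst (asm) ennreal_le_iff) auto
  then have "A / t \<le> r"
    using t by (simp add: field_simps)
  then show ?thesis using real by (simp add: ennreal_leI)
qed simp

text \<open>The second-moment method in the form of Cauchy-Schwarz: pointwise \<open>Z\<^sup>2 \<le> G W\<close> and
  \<open>Z \<le> t/2 Z\<^sup>2/W + W/(2t)\<close> (AM-GM, with \<open>t = B/A\<close> optimal) turn bounds on \<open>E Z\<close> and \<open>E W\<close>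
  into the lower bound \<open>E G \<ge> (E Z)\<^sup>2 / E W\<close>; \<open>G\<close> itself need not be measurable.\<close>
lemma nn_integral_ge_sq_div:
  fixes Z W G :: "'a \<Rightarrow> real"
  assumes Z: "Z \<in> borel_measurable M" and W: "W \<in> borel_measurable M"
    and ZWG: "AE x in M. 0 \<le> W x \<and> 0 \<le> G x \<and> (Z x)\<^sup>2 \<le> G x * W x"
    and EZ: "(\<integral>\<^sup>+x. Z x \<partial>M) = ennreal A" and EW: "(\<integral>\<^sup>+x. W x \<partial>M) \<le> ennreal B"
    and A: "0 < A" and B: "0 < B"
  shows "ennreal (A\<^sup>2 / B) \<le> (\<integral>\<^sup>+x. G x \<partial>M)"
proof -
  define t where "t = B / A"
  have t: "0 < t" using A B by (simp add: t_def)
  define h where "h x = (Z x)\<^sup>2 / W x" for x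
  have h: "(\<lambda>x. ennreal (h x)) \<in> borel_measurable M"
    unfolding h_def power2_eq_square
    by (intro measurable_compose[OF _ measurable_ennreal] borel_measurable_divide borel_measurable_times Z W)
  have W': "(\<lambda>x. ennreal (W x)) \<in> borel_measurable M"
    by (rule measurable_compose[OF W measurable_ennreal])
  have pw: "AE x in M. ennreal (Z x) \<le> ennreal (t / 2) * ennreal (h x) + ennreal (1 / (2 * t)) * ennreal (W x)
      \<and> ennreal (h x) \<le> ennreal (G x)"
    using ZWG
  proof eventually_elim
    fix x assume x: "0 \<le> W x \<and> 0 \<le> G x \<and> (Z x)\<^sup>2 \<le> G x * W x"
    then have "Z x \<le> t / 2 * h x + 1 / (2 * t) * W x" "h x \<le> G x" "0 \<le> h x"
      using amgm_sq_div[of "W x" "G x" "Z x" t] t by (simp_all add: h_def)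
    moreover have "ennreal (t / 2 * h x + 1 / (2 * t) * W x) =
        ennreal (t / 2) * ennreal (h x) + ennreal (1 / (2 * t)) * ennreal (W x)"
      using calculation(3) x t
      by (simp add: ennreal_plus[symmetric] ennreal_mult[symmetric] del: ennreal_plus)
    ultimately show "ennreal (Z x) \<le> ennreal (t / 2) * ennreal (h x) + ennreal (1 / (2 * t)) * ennreal (W x)
      \<and> ennreal (h x) \<le> ennreal (G x)"
      by (metis ennreal_leI)
  qed
  have "ennreal A \<le> (\<integral>\<^sup>+x. ennreal (t / 2) * ennreal (h x) + ennreal (1 / (2 * t)) * ennreal (W x) \<partial>M)"
    unfolding EZ[symmetric] by (rule nn_integral_mono_AE) (use pw in \<open>auto elim: AE_mp\<close>)
  also have "\<dots> = ennreal (t / 2) * (\<integral>\<^sup>+x. h x \<partial>M) + ennreal (1 / (2 * t)) * (\<integral>\<^sup>+x. W x \<partial>M)"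
    using h W' by (simp add: nn_integral_add nn_integral_cmult)
  also have "\<dots> \<le> ennreal (t / 2) * (\<integral>\<^sup>+x. h x \<partial>M) + ennreal (A / 2)"
    using EW mult_left_mono[OF EW, of "ennreal (1 / (2 * t))"] A B t
    by (simp add: ennreal_mult[symmetric] t_def del: ennreal_mult)
  finally have "ennreal (A / t) \<le> (\<integral>\<^sup>+x. h x \<partial>M)"
    using A t by (rule ennreal_div_le_of_le_mult_add_half)
  also have "(\<integral>\<^sup>+x. h x \<partial>M) \<le> (\<integral>\<^sup>+x. G x \<partial>M)"
    by (rule nn_integral_mono_AE) (use pw in \<open>auto elim: AE_mp\<close>)
  finally show ?thesis
    using A by (simp add: t_def power2_eq_square)
qed

lemma borel_measurable_desc_count:
  "(\<lambda>\<omega>. desc_count (\<lambda>u. fst (\<omega> u)) K n v) \<in> borel_measurable (gw_space p X)"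
  unfolding desc_count_def by (intro borel_measurable_sum borel_measurable_gw_tree_indicator)

lemma sum_pair_tree_prob_le:
  assumes "1 < m" and "trunc_mean p K \<le> m" and "trunc_pair_moment p K \<le> s"
  shows "(\<Sum>k\<in>{1..n}. m ^ k * pair_tree_prob p K n k) \<le> real n * ((1 + s / (m * (m - 1))) * m ^ (2 * n))"
  using sum_bounded_above[of "{1..n}" "\<lambda>k. m ^ k * pair_tree_prob p K n k"] pair_tree_prob_le[OF assms]
  by simp

lemma nn_integral_gw_conductance_ge:
  assumes X: "prob_space X" "sets X = sets borel" and pos: "AE x in X. 0 < x"
    and intX: "integrable X (\<lambda>x. x)" and E0: "0 < integral\<^sup>L X (\<lambda>x. x)"
    and intp: "integrable (measure_pmf p) real" and m1: "1 < offspring_mean p"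
    and int2: "integrable (measure_pmf p) (\<lambda>k. (real k)\<^sup>2)"
    and n: "1 \<le> n" and K: "0 < trunc_mean p K"
  defines "m \<equiv> offspring_mean p" and "E \<equiv> integral\<^sup>L X (\<lambda>x. x)"
    and "C \<equiv> 1 + measure_pmf.expectation p (\<lambda>k. (real k)\<^sup>2) / (offspring_mean p * (offspring_mean p - 1))"
  shows "ennreal ((trunc_mean p K ^ n)\<^sup>2 / (real n * E * C * m ^ (2 * n))) \<le>
    (\<integral>\<^sup>+\<omega>. ennreal (gw_conductance p n \<omega>) \<partial>gw_space p X)"
proof -
  let ?r = "\<lambda>\<omega> u. m ^ length u * max (snd (\<omega> u)) 0"
  have m0: "0 < m" using m1 by (simp add: m_def)
  have C: "1 \<le> C"
    unfolding C_def using m1 by (auto intro!: divide_nonneg_pos integral_nonneg_AE)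
  have ZWG: "AE \<omega> in gw_space p X. 0 \<le> flow_energy (\<lambda>u. fst (\<omega> u)) (?r \<omega>) K n \<and> 0 \<le> gw_conductance p n \<omega> \<and>
      (desc_count (\<lambda>u. fst (\<omega> u)) K n [])\<^sup>2 \<le> gw_conductance p n \<omega> * flow_energy (\<lambda>u. fst (\<omega> u)) (?r \<omega>) K n"
    using AE_gw_space_weights_pos[OF X pos]
  proof eventually_elim
    fix \<omega> :: "nat list \<Rightarrow> nat \<times> real" assume "\<forall>u. 0 < snd (\<omega> u)"
    then have r: "?r \<omega> = (\<lambda>u. m ^ length u * snd (\<omega> u))" "\<And>u. 0 < m ^ length u * snd (\<omega> u)"
      using m0 by (simp_all add: fun_eq_iff max_absorb1 less_imp_le)
    show "0 \<le> flow_energy (\<lambda>u. fst (\<omega> u)) (?r \<omega>) K n \<and> 0 \<le> gw_conductance p n \<omega> \<and>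
      (desc_count (\<lambda>u. fst (\<omega> u)) K n [])\<^sup>2 \<le> gw_conductance p n \<omega> * flow_energy (\<lambda>u. fst (\<omega> u)) (?r \<omega>) K n"
      unfolding gw_conductance_def m_def[symmetric] r(1)
      using desc_count_root_sq_le_conductance[OF r(2) n] eff_conductance_nonneg[OF r(2) n] r(2)
      by (auto simp: flow_energy_def less_imp_le intro!: sum_nonneg)
  qed
  have "(\<integral>\<^sup>+\<omega>. ennreal (flow_energy (\<lambda>u. fst (\<omega> u)) (?r \<omega>) K n) \<partial>gw_space p X) =
      ennreal (E * (\<Sum>k\<in>{1..n}. m ^ k * pair_tree_prob p K n k))"
    unfolding E_def using m0 by (intro nn_integral_flow_energy[OF X pos intX]) simp
  also have "\<dots> \<le> ennreal (real n * E * C * m ^ (2 * n))"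
    using sum_pair_tree_prob_le[OF m1[folded m_def] trunc_mean_le_offspring_mean[OF intp, folded m_def]
        trunc_pair_moment_le[OF int2]] E0
    by (intro ennreal_leI) (auto simp: C_def E_def m_def mult_left_mono mult.assoc mult.left_commute)
  finally show ?thesis
    using n E0 C K m0 unfolding E_def
    by (intro nn_integral_ge_sq_div[OF borel_measurable_desc_count _ ZWG nn_integral_desc_count_root[OF X]])
      (auto simp: flow_energy_def intro!: borel_measurable_sum borel_measurable_times borel_measurable_power
        borel_measurable_desc_count borel_measurable_weight[OF X(2)])
qed

lemma exists_trunc_mean_power_gt:
  assumes "integrable (measure_pmf p) real" and m0: "0 < offspring_mean p" and n: "1 \<le> n"
  shows "\<exists>K. offspring_mean p ^ n / 2 < trunc_mean p K ^ n \<and> 0 < trunc_mean p K"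
proof -
  have "(\<lambda>K. trunc_mean p K ^ n) \<longlonglongrightarrow> offspring_mean p ^ n"
    by (intro tendsto_power trunc_mean_tendsto_offspring_mean assms(1))
  from order_tendstoD(1)[OF this, of "offspring_mean p ^ n / 2"] obtain K
    where K: "offspring_mean p ^ n / 2 < trunc_mean p K ^ n"
    using m0 by (auto simp: eventually_sequentially)
  moreover have "trunc_mean p K \<noteq> 0" using K m0 n by (auto simp: power_0_left)
  ultimately show ?thesis using trunc_mean_nonneg[of p K] by (auto simp: order_le_less)
qed

theorem lemma3p3:
  fixes p :: "nat pmf" and X :: "real measure"
  assumes "pmf p 0 = 0"
    and "integrable (measure_pmf p) real"
    and "offspring_mean p > 1"
    and "prob_space X" and "sets X = sets borel"
    and "AE x in X. 0 < x"
    and "integrable X (\<lambda>x. x)" and "0 < integral\<^sup>L X (\<lambda>x. x)"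
    and "integrable (measure_pmf p) (\<lambda>k. (real k)^2)"
  shows "\<exists>c>0. \<forall>n\<ge>1. ennreal (c / real n) \<le> (\<integral>\<^sup>+ \<omega>. ennreal (gw_conductance p n \<omega>) \<partial>gw_space p X)"
proof -
  define m where "m = offspring_mean p"
  define E where "E = integral\<^sup>L X (\<lambda>x. x)"
  define C where "C = 1 + measure_pmf.expectation p (\<lambda>k. (real k)\<^sup>2) / (m * (m - 1))"
  have m0: "0 < m" and E0: "0 < E" using assms(3,8) by (simp_all add: m_def E_def)
  have C: "1 \<le> C"
    unfolding C_def using assms(3) by (auto simp: m_def intro!: divide_nonneg_pos integral_nonneg_AE)
  show ?thesis
  proof (intro exI[of _ "1 / (4 * C * E)"] conjI allI impI)
    fix n :: nat assume n: "1 \<le> n"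
    obtain K where K: "m ^ n / 2 < trunc_mean p K ^ n" and K0: "0 < trunc_mean p K"
      using exists_trunc_mean_power_gt[OF assms(2) _ n] m0 unfolding m_def by blast
    have "1 / (4 * C * E) / real n = (a / 2)\<^sup>2 / (real n * E * C * a\<^sup>2)" if "0 < a" for a :: real
      using that n C E0 by (simp add: field_simps power2_eq_square)
    from this[of "m ^ n"] have "1 / (4 * C * E) / real n = (m ^ n / 2)\<^sup>2 / (real n * E * C * m ^ (2 * n))"
      unfolding power_even_eq using m0 by simp
    also have "\<dots> \<le> (trunc_mean p K ^ n)\<^sup>2 / (real n * E * C * m ^ (2 * n))"
      using K m0 n E0 C by (intro divide_right_mono power_mono) auto
    finally have "ennreal (1 / (4 * C * E) / real n) \<le> ennreal ((trunc_mean p K ^ n)\<^sup>2 / (real n * E * C * m ^ (2 * n)))"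
      by (rule ennreal_leI)
    also have "\<dots> \<le> (\<integral>\<^sup>+\<omega>. ennreal (gw_conductance p n \<omega>) \<partial>gw_space p X)"
      unfolding m_def E_def C_def by (rule nn_integral_gw_conductance_ge[OF assms(4-8,2,3,9) n K0])
    finally show "ennreal (1 / (4 * C * E) / real n) \<le> (\<integral>\<^sup>+\<omega>. ennreal (gw_conductance p n \<omega>) \<partial>gw_space p X)" .
  qed (use C E0 in simp)
qed

end
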